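(* Let $m, n \geq 2$ be integers and let $D_n^m \subset \mathbb{R}^2$ be the set defined below, with bars $B_1,\dots,B_{2^n}$. Let $A$ and $A'$ be translates of $D_n^m$, with bars $B_i$ of $A$ and $B_i'$ of $A'$ being the translates of the corresponding bars of $D_n^m$. Suppose that for some $1 \leq r \leq 2^n$ the first bar $B_1'$ of $A'$ is obtained from the bar $B_r$ of $A$ by a translation by $y^\ast \geq 1$ downwards and by $x^\ast$ to the right, where $1 \leq x^\ast \leq m-1$. Then $A$ and $A'$ have disjoint interiors.
   Context: Let $s_1, s_2, \dots$ be the sequence with $s_i = 1 + \nu_2(i)$, where $\nu_2(i)$ is the exponent of $2$ in the prime factorization of $i$ (so $s_i$ is the position, counted from the right, of the lowest $1$ bit of $i$ in binary; the sequence begins $1,2,1,3,1,2,1,4,\dots$). For $i \geq 1$ put $y_i = \sum_{j=1}^{i-1} s_j$ (so $y_1 = 0$). For integers $m \geq 2$, $n \geq 1$, define the bars $B_i = [(i-1)m,\, im] \times [y_i,\, y_i + 1]$ for $1 \leq i \leq 2^n$ (axis-parallel rectangles of width $m$ and height $1$), and the connectors $V_i = [im-1,\, im] \times [y_i + 1,\, y_{i+1} + 1]$ for $1 \leq i \leq 2^n - 1$ (axis-parallel rectangles of width $1$ and height $s_i$). Define $D_n^m = \bigcup_{i=1}^{2^n} B_i \cup \bigcup_{i=1}^{2^n-1} V_i$; this is a topological disk in the plane. *)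

theory Defs
  imports "HOL-Analysis.Analysis" "HOL-Computational_Algebra.Factorial_Ring"
begin

definition s_seq :: "nat \<Rightarrow> nat" where
  "s_seq i = 1 + multiplicity (2::nat) i"

definition y_seq :: "nat \<Rightarrow> nat" where
  "y_seq i = (\<Sum>j\<in>{1..<i}. s_seq j)"

definition bar :: "nat \<Rightarrow> nat \<Rightarrow> (real \<times> real) set" where
  "bar m i = {real ((i - 1) * m) .. real (i * m)} \<times> {real (y_seq i) .. real (y_seq i) + 1}"

definition connector :: "nat \<Rightarrow> nat \<Rightarrow> (real \<times> real) set" where
  "connector m i = {real (i * m) - 1 .. real (i * m)} \<times>
                   {real (y_seq i) + 1 .. real (y_seq (Suc i)) + 1}"

definition Dnm :: "nat \<Rightarrow> nat \<Rightarrow> (real \<times> real) set" where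
  "Dnm n m = (\<Union>i\<in>{1..2^n}. bar m i) \<union> (\<Union>i\<in>{1..<2^n}. connector m i)"

end

theory Submission
  imports Defs
begin

(* Over the column (j-1)m < x < jm every point of D_n^m has height at least y_j and at most
   y_{j+1} + 1, and at most y_j + 1 outside the connector at the right end of the column.
   Since y_{k+1} = k + nu_2(k!) and binomial coefficients are integers,
   y_{a+1} + y_{b+1} <= y_{a+b+1}.  As 1 <= x* <= m - 1, column j of A lies over column i of A'
   with j = i + r, or with j = i + r - 1 and then left of the connector of column i; in both cases
   superadditivity puts the top of A' no higher than the bottom of A.  A common interior point
   would give a point of A with a point of A' slightly above it on a vertical line missing all
   column boundaries. *)

lemma multiplicity_fact_eq_sum:
  fixes p :: nat
  assumes "prime p"
  shows "multiplicity p (fact k) = (\<Sum>j\<in>{1..k}. multiplicity p j)"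
proof (induction k)
  case (Suc k)
  have "multiplicity p (fact (Suc k) :: nat) = multiplicity p (Suc k) + multiplicity p (fact k :: nat)"
    unfolding fact_Suc of_nat_id using assms
    by (intro prime_elem_multiplicity_mult_distrib) auto
  moreover have "{1..Suc k} = insert (Suc k) {1..k}" by auto
  ultimately show ?case using Suc by simp
qed simp

lemma multiplicity_fact_add_le:
  fixes p :: nat
  assumes "prime p"
  shows "multiplicity p (fact a) + multiplicity p (fact b) \<le> multiplicity p (fact (a + b))"
proof -
  have "(fact (a + b) :: nat) = fact a * fact b * ((a + b) choose a)"
    using binomial_fact_lemma[of a "a + b"] by (simp add: ac_simps)
  then have "multiplicity p (fact (a + b) :: nat)
      = multiplicity p (fact a :: nat) + multiplicity p (fact b :: nat) + multiplicity p ((a + b) choose a)"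
    using assms by (simp add: prime_elem_multiplicity_mult_distrib)
  then show ?thesis by simp
qed

lemma mem_translation_iff:
  fixes t :: "'a::ab_group_add"
  shows "q \<in> (\<lambda>p. p + t) ` S \<longleftrightarrow> q - t \<in> S"
  by (auto intro!: image_eqI[where x = "q - t"])

lemma mem_translation_Pair_iff:
  fixes t :: "'a::ab_group_add \<times> 'b::ab_group_add"
  shows "(x, y) \<in> (\<lambda>p. p + t) ` S \<longleftrightarrow> (x - fst t, y - snd t) \<in> S"
  by (cases t) (simp add: mem_translation_iff)

lemma translate_cbox_eq_imp_eq:
  fixes a b a' b' t t' :: "'a::euclidean_space"
  assumes "cbox a b \<noteq> {}" "(\<lambda>p. p + t) ` cbox a b = (\<lambda>p. p + t') ` cbox a' b'"
  shows "a + t = a' + t'"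
proof -
  have translate: "(\<lambda>p. p + c) ` cbox u w = cbox (u + c) (w + c)" for c u w :: 'a
    using cbox_translation[of c u w] by (simp add: add.commute)
  have "cbox (a + t) (b + t) \<noteq> {}"
    using assms(1) translate[of t a b] by (metis image_is_empty)
  moreover have "cbox (a + t) (b + t) = cbox (a' + t') (b' + t')"
    using assms(2) by (simp only: translate)
  ultimately show ?thesis by (simp add: eq_cbox)
qed

lemma open_obtains_vertical_pair:
  fixes U :: "(real \<times> real) set"
  assumes "open U" "U \<noteq> {}" "finite F"
  obtains x y \<delta> where "x \<notin> F" "(x, y) \<in> U" "(x, y + \<delta>) \<in> U" "\<delta> > 0"
proof -
  obtain p where "p \<in> U" using assms(2) by blast
  obtain e where "e > 0" and ball: "ball p e \<subseteq> U"
    using assms(1) \<open>p \<in> U\<close> by (rule openE)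
  have "infinite {fst p - e/2 <..< fst p + e/2}" using \<open>e > 0\<close> by simp
  then have "\<not> {fst p - e/2 <..< fst p + e/2} \<subseteq> F" using assms(3) finite_subset by blast
  then obtain x where x: "x \<in> {fst p - e/2 <..< fst p + e/2}" "x \<notin> F" by blast
  have "(x, snd p + \<delta>) \<in> U" if "0 \<le> \<delta>" "\<delta> < e/2" for \<delta>
  proof -
    have "dist p (x, snd p + \<delta>) = sqrt ((fst p - x)\<^sup>2 + \<delta>\<^sup>2)"
      by (cases p) (simp add: dist_Pair_Pair dist_real_def)
    also have "\<dots> \<le> \<bar>fst p - x\<bar> + \<bar>\<delta>\<bar>" by (rule sqrt_sum_squares_le_sum_abs)
    also have "\<dots> < e" using x(1) that by auto
    finally show ?thesis using ball by auto
  qed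
  from this[of 0] this[of "e/4"] show thesis
    using that[where x = x and y = "snd p" and \<delta> = "e/4"] x(2) \<open>e > 0\<close> by simp
qed

lemma y_seq_Suc: "y_seq (Suc k) = k + multiplicity 2 (fact k :: nat)"
proof -
  have "{1..<Suc k} = {1..k}" by auto
  then show ?thesis
    unfolding y_seq_def s_seq_def multiplicity_fact_eq_sum[OF two_is_prime_nat]
    by (simp add: sum.distrib del: One_nat_def)
qed

lemma y_seq_Suc_add_le: "y_seq (Suc a) + y_seq (Suc b) \<le> y_seq (Suc (a + b))"
  using multiplicity_fact_add_le[OF two_is_prime_nat, of a b] by (simp add: y_seq_Suc)

lemma y_seq_le_Suc: "y_seq i \<le> y_seq (Suc i)"
  unfolding y_seq_def by (rule sum_mono2) auto

lemma bar_eq_cbox: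
  "bar m i = cbox (real ((i - 1) * m), real (y_seq i)) (real (i * m), real (y_seq i) + 1)"
  by (simp add: bar_def cbox_Pair_eq)

lemma translated_bars_eq_imp_eq:
  assumes "(\<lambda>p. p + t') ` bar m i = (\<lambda>p. p + t) ` bar m j"
  shows "(real ((i - 1) * m), real (y_seq i)) + t' = (real ((j - 1) * m), real (y_seq j)) + t"
proof -
  have "bar m i \<noteq> {}" by (simp add: bar_def mult_right_mono)
  then show ?thesis using assms unfolding bar_eq_cbox by (rule translate_cbox_eq_imp_eq)
qed

lemma Dnm_column_bounds:
  assumes "(x, y) \<in> Dnm n m" "2 \<le> m" "x \<notin> (\<lambda>k. real k * m) ` {..2^n}"
  obtains j where "1 \<le> j" "(real j - 1) * m < x" "x < real j * m"
    "real (y_seq j) \<le> y" "y \<le> real (y_seq (Suc j)) + 1"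
    "x < real j * m - 1 \<Longrightarrow> y \<le> real (y_seq j) + 1"
  using assms(1) unfolding Dnm_def
proof (elim UnE UN_E)
  fix i assume i: "i \<in> {1..2^n}" and "(x, y) \<in> bar m i"
  moreover have "(real i - 1) * m \<in> (\<lambda>k. real k * m) ` {..2^n}"
    using i by (intro image_eqI[of _ _ "i - 1"]) auto
  moreover have "real i * m \<in> (\<lambda>k. real k * m) ` {..2^n}" using i by auto
  moreover have "real (y_seq i) \<le> real (y_seq (Suc i))" using y_seq_le_Suc by simp
  ultimately show thesis using that[of i] assms(3) by (fastforce simp: bar_def)
next
  fix i assume i: "i \<in> {1..<2^n}" and "(x, y) \<in> connector m i"
  moreover have "x \<noteq> real i * m" using assms(3) i by force
  ultimately show thesis using that[of i] assms(2) by (fastforce simp: connector_def algebra_simps)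
qed

lemma Dnm_shifted_heights:
  fixes k :: nat and xs u v u' v' :: real
  assumes "2 \<le> m" "1 \<le> xs" "xs \<le> real m - 1"
    and "(u, v) \<in> Dnm n m" "(u', v') \<in> Dnm n m" "u = u' + real k * m + xs"
    and "u \<notin> (\<lambda>k. real k * m) ` {..2^n}" "u' \<notin> (\<lambda>k. real k * m) ` {..2^n}"
  shows "v' + real (y_seq (Suc k)) \<le> v + 1"
proof -
  obtain j where j: "(real j - 1) * m < u" "u < real j * m" "real (y_seq j) \<le> v"
    using Dnm_column_bounds[OF assms(4,1,7)] by metis
  obtain i where i: "1 \<le> i" "(real i - 1) * m < u'" "u' < real i * m"
      "v' \<le> real (y_seq (Suc i)) + 1" "u' < real i * m - 1 \<Longrightarrow> v' \<le> real (y_seq i) + 1"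
    using Dnm_column_bounds[OF assms(5,1,8)] by metis
  have "(real j - 1) * m < (real i + real k + 1) * m" "(real i + real k - 1) * m < real j * m"
    using i(2,3) j(1,2) assms(2,3,6) by (auto simp: algebra_simps)
  then have "real j - 1 < real i + real k + 1" "real i + real k - 1 < real j"
    using assms(1) by (simp_all add: mult_less_cancel_right)
  then consider "j = Suc (i + k)" | "j = i + k" by linarith
  then show ?thesis
  proof cases
    case 1
    then have "y_seq (Suc k) + y_seq (Suc i) \<le> y_seq j"
      using y_seq_Suc_add_le[of k i] by (simp add: add.commute)
    then show ?thesis using i(4) j(3) by linarith
  next
    case 2
    then have "u' < real i * m - 1" using j(2) assms(2,6) by (simp add: algebra_simps)
    moreover obtain i' where "i = Suc i'" using i(1) by (cases i) auto
    then have "y_seq (Suc k) + y_seq i \<le> y_seq j"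
      using 2 y_seq_Suc_add_le[of k i'] by (simp add: add.commute)
    ultimately show ?thesis using i(5) j(3) by linarith
  qed
qed

theorem lemma2:
  fixes m n r :: nat and t t' :: "real \<times> real" and xs ys :: real
  assumes "m \<ge> 2" and "n \<ge> 2"
    and "1 \<le> r" and "r \<le> 2^n"
    and "ys \<ge> 1"
    and "1 \<le> xs" and "xs \<le> real m - 1"
    and "(\<lambda>p. p + t') ` bar m 1 = (\<lambda>p. p + (xs, - ys)) ` ((\<lambda>p. p + t) ` bar m r)"
  shows "interior ((\<lambda>p. p + t) ` Dnm n m) \<inter> interior ((\<lambda>p. p + t') ` Dnm n m) = {}"
proof (rule ccontr)
  let ?A = "(\<lambda>p. p + t) ` Dnm n m" and ?A' = "(\<lambda>p. p + t') ` Dnm n m"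
  let ?W = "(\<lambda>k. real k * m) ` {..2^n}"
  assume "interior ?A \<inter> interior ?A' \<noteq> {}"
  have "(\<lambda>p. p + t') ` bar m 1 = (\<lambda>p. p + (t + (xs, - ys))) ` bar m r"
    using assms(8) by (simp add: image_image add.assoc)
  then have shift: "fst t' = fst t + real (r - 1) * m + xs" "snd t' = snd t + real (y_seq r) - ys"
    by (auto dest!: translated_bars_eq_imp_eq simp: y_seq_def prod_eq_iff)
  define F where "F = (\<lambda>w. w + fst t) ` ?W \<union> (\<lambda>w. w + fst t') ` ?W"
  have "finite F" by (simp add: F_def)
  obtain x y \<delta> where "x \<notin> F" and "(x, y) \<in> interior ?A \<inter> interior ?A'"
    and "(x, y + \<delta>) \<in> interior ?A \<inter> interior ?A'" and "\<delta> > 0"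
    by (rule open_obtains_vertical_pair[OF open_Int[OF open_interior open_interior]
          \<open>interior ?A \<inter> interior ?A' \<noteq> {}\<close> \<open>finite F\<close>])
  then have "(x, y) \<in> ?A" "(x, y + \<delta>) \<in> ?A'" using interior_subset by blast+
  then have "(x - fst t, y - snd t) \<in> Dnm n m" "(x - fst t', y + \<delta> - snd t') \<in> Dnm n m"
    by (simp_all only: mem_translation_Pair_iff)
  moreover have "x - fst t \<notin> ?W" "x - fst t' \<notin> ?W"
    using \<open>x \<notin> F\<close> by (simp_all add: mem_translation_iff F_def)
  moreover have "x - fst t = (x - fst t') + real (r - 1) * m + xs" using shift by simp
  ultimately have "(y + \<delta> - snd t') + real (y_seq (Suc (r - 1))) \<le> (y - snd t) + 1"
    using Dnm_shifted_heights[OF assms(1,6,7)] by blast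
  then show False using shift assms(3,5) \<open>\<delta> > 0\<close> by simp
qed

end
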